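(* Let $\tau\in\mathbb N$ and $f:\mathbb Z_+\times\mathbb R\to\mathbb R$, continuous in $x$, be asymptotically $\tau$-periodic in time, $f=P+R$. Assume: the $\tau$-periodic solutions of $x(t+1)=P(t,x(t))$ are isolated; every $g\in H^+(f)$ is strictly increasing in $x$; and the solution $\varphi(t,u_0,f)$ of $x(t+1)=f(t,x(t))$, $x(0)=u_0$, is bounded on $\mathbb Z_+$. Then $\varphi(t,u_0,f)$ is asymptotically $\tau$-periodic: there is a $\tau$-periodic sequence $p$ with $\varphi(t,u_0,f)-p(t)\to0$ as $t\to\infty$.
   Context: Asymptotically $\tau$-periodic in time: $f=P+R$ with $P(t+\tau,x)=P(t,x)$ for all $(t,x)$ and $\lim_{t\to\infty}R(t,x)=0$ uniformly in $x$ on compact subsets of $\mathbb R$. $H^+(f)$ is the closure of $\{f(\cdot+h,\cdot):h\in\mathbb Z_+\}$ in the topology of uniform convergence on finite $t$-sets times compact $x$-sets. A $\tau$-periodic solution $\varphi(t,u_0,P)$ (i.e. $\varphi(\tau,u_0,P)=u_0$) of $x(t+1)=P(t,x(t))$ is isolated if there is $\delta>0$ such that no $u\neq u_0$ with $|u-u_0|<\delta$ gives a $\tau$-periodic solution. *)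

theory Defs
  imports "HOL-Analysis.Analysis"
begin

primrec sol :: "(nat \<Rightarrow> real \<Rightarrow> real) \<Rightarrow> real \<Rightarrow> nat \<Rightarrow> real" where
  "sol f u0 0 = u0"
| "sol f u0 (Suc t) = f t (sol f u0 t)"

text \<open>H^+(f): closure of the forward translates f(.+h,.) in the topology of uniform
  convergence on finite t-sets times compact x-sets (neighbourhood-basis description).\<close>
definition Hplus :: "(nat \<Rightarrow> real \<Rightarrow> real) \<Rightarrow> (nat \<Rightarrow> real \<Rightarrow> real) set" where
  "Hplus f = {g. \<forall>T K e. finite T \<longrightarrow> compact K \<longrightarrow> e > 0 \<longrightarrow>
      (\<exists>h. \<forall>t\<in>T. \<forall>x\<in>K. \<bar>f (t + h) x - g t x\<bar> < e)}"

definition periodic_sol :: "nat \<Rightarrow> (nat \<Rightarrow> real \<Rightarrow> real) \<Rightarrow> real \<Rightarrow> bool" where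
  "periodic_sol \<tau> P u0 \<longleftrightarrow> sol P u0 \<tau> = u0"

definition isolated_periodic_sol :: "nat \<Rightarrow> (nat \<Rightarrow> real \<Rightarrow> real) \<Rightarrow> real \<Rightarrow> bool" where
  "isolated_periodic_sol \<tau> P u0 \<longleftrightarrow>
     (\<exists>\<delta>>0. \<forall>u. u \<noteq> u0 \<and> \<bar>u - u0\<bar> < \<delta> \<longrightarrow> \<not> periodic_sol \<tau> P u)"

end

theory Submission
  imports Defs
begin

text \<open>Sample the solution at the times k\<tau>: y k = \<phi>(k\<tau>, u0, f). Along any subsequence on
  which y converges to v, the next sample converges to \<Phi> v, where \<Phi> is the period map of the
  limit equation x(t+1) = P(t, x(t)); \<Phi> is monotone because P \<in> Hplus f. Hence if c is not a fixed
  point of \<Phi>, say c < \<Phi> c, the sequence y cannot cross c downwards infinitely often, so it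
  eventually stays on one side of c. Since the fixed points of \<Phi> are isolated, such c are dense,
  and a bounded sequence that eventually stays on one side of each point of a dense set
  converges. Its limit L gives \<phi>(k\<tau> + r, u0, f) \<rightarrow> \<phi>(r, L, P) for every r.\<close>

lemma eventually_or_eventually_not_if_eventually_invariant:
  assumes "eventually (\<lambda>k. Q k \<longrightarrow> Q (Suc k)) sequentially"
  shows "eventually Q sequentially \<or> eventually (\<lambda>k. \<not> Q k) sequentially"
proof -
  obtain N where N: "\<And>k. k \<ge> N \<Longrightarrow> Q k \<Longrightarrow> Q (Suc k)"
    using assms unfolding eventually_sequentially by blast
  show ?thesis
  proof (cases "\<exists>k0\<ge>N. Q k0")
    case True
    then obtain k0 where k0: "k0 \<ge> N" "Q k0" by blast
    have "Q k" if "k0 \<le> k" for k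
      using that
    proof (induction k rule: dec_induct)
      case (step k)
      then show ?case using N k0(1) by simp
    qed (use k0 in simp)
    then show ?thesis unfolding eventually_sequentially by blast
  next
    case False
    then show ?thesis unfolding eventually_sequentially by blast
  qed
qed

lemma frequently_convergent_subseq:
  fixes y :: "nat \<Rightarrow> 'a::heine_borel"
  assumes "bounded (range y)" and "frequently Q sequentially"
  obtains q l where "filterlim q at_top sequentially" "\<And>j. Q (q j)" "(y \<circ> q) \<longlonglongrightarrow> l"
proof -
  obtain s where s: "\<And>N. s N \<ge> N \<and> Q (s N)"
    using assms(2) unfolding frequently_sequentially by metis
  have "bounded (range (y \<circ> s))"
    using assms(1) by (rule bounded_subset) auto
  then obtain l r where r: "strict_mono r" "(y \<circ> s \<circ> r) \<longlonglongrightarrow> l"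
    using bounded_imp_convergent_subsequence by blast
  have "filterlim s at_top sequentially"
    unfolding filterlim_at_top eventually_sequentially using s le_trans by blast
  then have "filterlim (s \<circ> r) at_top sequentially"
    unfolding comp_def by (rule filterlim_compose[OF _ filterlim_subseq[OF r(1)]])
  with r(2) s show ?thesis
    by (intro that[of "s \<circ> r" l]) (simp_all add: comp_assoc)
qed

text \<open>A sequential substitute for y being an asymptotic pseudo-orbit of \<Phi>; no continuity of \<Phi>
  is needed.\<close>

definition follows_at_limits :: "(real \<Rightarrow> real) \<Rightarrow> (nat \<Rightarrow> real) \<Rightarrow> bool" where
  "follows_at_limits \<Phi> y \<longleftrightarrow> (\<forall>q v. filterlim q at_top sequentially \<longrightarrow> (y \<circ> q) \<longlonglongrightarrow> v \<longrightarrow>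
      (\<lambda>j. y (Suc (q j))) \<longlonglongrightarrow> \<Phi> v)"

lemma eventually_one_side_if_below_image:
  fixes y :: "nat \<Rightarrow> real" and \<Phi> :: "real \<Rightarrow> real"
  assumes bdd: "bounded (range y)" and "mono \<Phi>"
    and orbit: "follows_at_limits \<Phi> y"
    and "c < \<Phi> c"
  shows "eventually (\<lambda>k. c \<le> y k) sequentially \<or> eventually (\<lambda>k. y k \<le> c) sequentially"
proof -
  have "eventually (\<lambda>k. c \<le> y k \<longrightarrow> c \<le> y (Suc k)) sequentially"
  proof (rule ccontr)
    assume "\<not> ?thesis"
    then have "frequently (\<lambda>k. c \<le> y k \<and> y (Suc k) < c) sequentially"
      by (simp add: not_eventually not_le)
    then obtain q v where q: "filterlim q at_top sequentially"
      and cross: "\<And>j. c \<le> y (q j) \<and> y (Suc (q j)) < c" and v: "(y \<circ> q) \<longlonglongrightarrow> v"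
      by (rule frequently_convergent_subseq[OF bdd]) blast
    have next_lim: "(\<lambda>j. y (Suc (q j))) \<longlonglongrightarrow> \<Phi> v"
      using orbit q v unfolding follows_at_limits_def by blast
    have "c \<le> v"
      by (rule LIMSEQ_le_const[OF v]) (use cross in auto)
    moreover have "\<Phi> v \<le> c"
      using next_lim by (rule LIMSEQ_le_const2) (use cross in \<open>auto intro: less_imp_le\<close>)
    ultimately show False
      using \<open>mono \<Phi>\<close> \<open>c < \<Phi> c\<close> by (meson monoD not_le order_trans)
  qed
  from eventually_or_eventually_not_if_eventually_invariant[OF this]
  consider "eventually (\<lambda>k. c \<le> y k) sequentially" | "eventually (\<lambda>k. \<not> c \<le> y k) sequentially"
    by blast
  then show ?thesis
  proof cases
    case 2
    then have "eventually (\<lambda>k. y k \<le> c) sequentially"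
      by eventually_elim simp
    then show ?thesis by blast
  qed simp
qed

lemma eventually_one_side_of_nonfixed_point:
  fixes y :: "nat \<Rightarrow> real" and \<Phi> :: "real \<Rightarrow> real"
  assumes bdd: "bounded (range y)" and mono: "mono \<Phi>"
    and orbit: "follows_at_limits \<Phi> y"
    and "\<Phi> c \<noteq> c"
  shows "eventually (\<lambda>k. c \<le> y k) sequentially \<or> eventually (\<lambda>k. y k \<le> c) sequentially"
proof (cases "c < \<Phi> c")
  case True
  then show ?thesis using eventually_one_side_if_below_image[OF assms(1-3)] by blast
next
  case False
  \<comment> \<open>Reflect at 0: the case \<Phi> c < c becomes the previous one for -y and v \<mapsto> -\<Phi>(-v).\<close>
  have "eventually (\<lambda>k. - c \<le> - y k) sequentially \<or> eventually (\<lambda>k. - y k \<le> - c) sequentially"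
  proof (rule eventually_one_side_if_below_image[where \<Phi> = "\<lambda>v. - \<Phi> (- v)"])
    show "bounded (range (\<lambda>k. - y k))"
      using bdd by simp
    show "mono (\<lambda>v. - \<Phi> (- v))"
      using mono by (auto simp: mono_def)
    show "- c < - \<Phi> (- (- c))"
      using False \<open>\<Phi> c \<noteq> c\<close> by simp
    show "follows_at_limits (\<lambda>v. - \<Phi> (- v)) (\<lambda>k. - y k)"
      unfolding follows_at_limits_def
    proof (intro allI impI)
      fix q v assume q: "filterlim q at_top sequentially" and "((\<lambda>k. - y k) \<circ> q) \<longlonglongrightarrow> v"
      then have "(y \<circ> q) \<longlonglongrightarrow> - v"
        using tendsto_minus by (fastforce simp: comp_def)
      with orbit q show "(\<lambda>j. - y (Suc (q j))) \<longlonglongrightarrow> - \<Phi> (- v)"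
        unfolding follows_at_limits_def by (intro tendsto_minus) blast
    qed
  qed
  then show ?thesis by auto
qed

lemma nonfixed_point_between_if_isolated_fixpoints:
  fixes \<Phi> :: "real \<Rightarrow> real"
  assumes isolated: "\<And>v. \<Phi> v = v \<Longrightarrow> \<exists>\<delta>>0. \<forall>u. u \<noteq> v \<and> \<bar>u - v\<bar> < \<delta> \<longrightarrow> \<Phi> u \<noteq> u"
    and "a < b"
  shows "\<exists>c. a < c \<and> c < b \<and> \<Phi> c \<noteq> c"
proof (cases "\<Phi> ((a + b) / 2) = (a + b) / 2")
  case True
  then obtain \<delta> where "\<delta> > 0" and \<delta>: "\<And>u. u \<noteq> (a + b) / 2 \<Longrightarrow> \<bar>u - (a + b) / 2\<bar> < \<delta> \<Longrightarrow> \<Phi> u \<noteq> u"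
    using isolated by blast
  define c where "c = (a + b) / 2 + min \<delta> (b - a) / 4"
  have "a < c" "c < b" "c \<noteq> (a + b) / 2" "\<bar>c - (a + b) / 2\<bar> < \<delta>"
    using \<open>\<delta> > 0\<close> \<open>a < b\<close> unfolding c_def by (auto simp: min_def field_simps)
  then show ?thesis using \<delta> by blast
qed (use \<open>a < b\<close> in \<open>auto intro: exI[of _ "(a + b) / 2"]\<close>)

lemma convergent_if_eventually_one_side_of_dense:
  fixes y :: "nat \<Rightarrow> real"
  assumes bdd: "bounded (range y)"
    and dense: "\<And>a b. a < b \<Longrightarrow> \<exists>c. a < c \<and> c < b \<and>
                  (eventually (\<lambda>k. c \<le> y k) sequentially \<or> eventually (\<lambda>k. y k \<le> c) sequentially)"
  shows "convergent y"
proof -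
  obtain B where B: "\<And>k. \<bar>y k\<bar> \<le> B"
    using bdd unfolding bounded_real by auto
  define S where "S = {c. eventually (\<lambda>k. c \<le> y k) sequentially}"
  have "- B \<in> S"
    using B unfolding S_def by (auto simp: abs_le_iff minus_le_iff intro!: always_eventually)
  have "bdd_above S"
  proof (rule bdd_aboveI)
    fix c assume "c \<in> S"
    then obtain N where "c \<le> y N"
      unfolding S_def eventually_sequentially by auto
    then show "c \<le> B" using B[of N] by (simp add: abs_le_iff)
  qed
  have "y \<longlonglongrightarrow> Sup S"
  proof (rule tendstoI)
    fix e :: real assume "e > 0"
    then obtain s where "s \<in> S" "Sup S - e < s"
      using less_cSupE[of "Sup S - e" S] \<open>- B \<in> S\<close> by auto
    obtain c where c: "Sup S < c" "c < Sup S + e"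
      and side: "eventually (\<lambda>k. c \<le> y k) sequentially \<or> eventually (\<lambda>k. y k \<le> c) sequentially"
      using dense[of "Sup S" "Sup S + e"] \<open>e > 0\<close> by auto
    have "c \<notin> S"
      using cSup_upper[OF _ \<open>bdd_above S\<close>] c(1) by force
    with side have "eventually (\<lambda>k. y k \<le> c) sequentially"
      by (auto simp: S_def)
    moreover have "eventually (\<lambda>k. s \<le> y k) sequentially"
      using \<open>s \<in> S\<close> by (simp add: S_def)
    ultimately show "eventually (\<lambda>k. dist (y k) (Sup S) < e) sequentially"
      by eventually_elim (use \<open>Sup S - e < s\<close> c in \<open>auto simp: dist_real_def\<close>)
  qed
  then show ?thesis by (rule convergentI)
qed

theorem convergent_if_follows_at_limits:
  fixes y :: "nat \<Rightarrow> real" and \<Phi> :: "real \<Rightarrow> real"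
  assumes "bounded (range y)" and "mono \<Phi>"
    and "follows_at_limits \<Phi> y"
    and "\<And>v. \<Phi> v = v \<Longrightarrow> \<exists>\<delta>>0. \<forall>u. u \<noteq> v \<and> \<bar>u - v\<bar> < \<delta> \<longrightarrow> \<Phi> u \<noteq> u"
  shows "convergent y"
  using assms(1)
proof (rule convergent_if_eventually_one_side_of_dense)
  fix a b :: real assume "a < b"
  with assms(4) obtain c where "a < c" "c < b" "\<Phi> c \<noteq> c"
    using nonfixed_point_between_if_isolated_fixpoints by blast
  with eventually_one_side_of_nonfixed_point[OF assms(1-3)] show "\<exists>c. a < c \<and> c < b \<and>
      (eventually (\<lambda>k. c \<le> y k) sequentially \<or> eventually (\<lambda>k. y k \<le> c) sequentially)"
    by blast
qed

lemma tendsto_diff_periodic_if_tendsto_residue_classes: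
  fixes x :: "nat \<Rightarrow> real"
  assumes "\<tau> > 0" and classes: "\<And>r. r < \<tau> \<Longrightarrow> (\<lambda>k. x (k * \<tau> + r)) \<longlonglongrightarrow> l r"
  shows "(\<lambda>t. x t - l (t mod \<tau>)) \<longlonglongrightarrow> 0"
proof (rule tendstoI)
  fix e :: real assume "e > 0"
  have "eventually (\<lambda>k. \<forall>r\<in>{..<\<tau>}. dist (x (k * \<tau> + r)) (l r) < e) sequentially"
    using tendstoD[OF classes \<open>e > 0\<close>] by (auto intro: eventually_ball_finite)
  then obtain N where N: "\<And>k r. k \<ge> N \<Longrightarrow> r < \<tau> \<Longrightarrow> dist (x (k * \<tau> + r)) (l r) < e"
    unfolding eventually_sequentially by blast
  show "eventually (\<lambda>t. dist (x t - l (t mod \<tau>)) 0 < e) sequentially"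
    unfolding eventually_sequentially
  proof (intro exI allI impI)
    fix t assume "N * \<tau> \<le> t"
    then have "N \<le> t div \<tau>"
      using \<open>\<tau> > 0\<close> by (metis div_le_mono div_mult_self_is_m)
    then have "dist (x (t div \<tau> * \<tau> + t mod \<tau>)) (l (t mod \<tau>)) < e"
      using N[OF _ mod_less_divisor[OF \<open>\<tau> > 0\<close>]] by blast
    then show "dist (x t - l (t mod \<tau>)) 0 < e"
      by (simp add: dist_real_def)
  qed
qed

lemma isCont_if_locally_uniform_approx:
  fixes g :: "real \<Rightarrow> real"
  assumes "\<And>e. e > 0 \<Longrightarrow> \<exists>h. isCont h x \<and> (\<forall>z\<in>cball x 1. \<bar>g z - h z\<bar> < e)"
  shows "isCont g x"
  unfolding continuous_at_eps_delta
proof (intro allI impI)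
  fix e :: real assume "e > 0"
  then obtain h where "isCont h x" and h: "\<And>z. z \<in> cball x 1 \<Longrightarrow> \<bar>g z - h z\<bar> < e / 3"
    using assms[of "e / 3"] by auto
  then obtain d where "d > 0" and d: "\<And>z. dist z x < d \<Longrightarrow> dist (h z) (h x) < e / 3"
    using \<open>e > 0\<close> unfolding continuous_at_eps_delta by (meson divide_pos_pos zero_less_numeral)
  show "\<exists>d>0. \<forall>z. dist z x < d \<longrightarrow> dist (g z) (g x) < e"
  proof (intro exI[of _ "min d 1"] conjI allI impI)
    fix z assume z: "dist z x < min d 1"
    then have "\<bar>g z - h z\<bar> < e / 3" "\<bar>g x - h x\<bar> < e / 3" "\<bar>h z - h x\<bar> < e / 3"
      using h d by (auto simp: dist_commute dist_real_def)
    then show "dist (g z) (g x) < e"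
      unfolding dist_real_def by arith
  qed (use \<open>d > 0\<close> in simp)
qed

lemma mono_sol:
  assumes "\<And>t. mono (g t)"
  shows "mono (\<lambda>u. sol g u n)"
  by (induction n) (auto simp: mono_def intro: assms[THEN monoD])

lemma periodic_shift:
  fixes P :: "nat \<Rightarrow> 'a \<Rightarrow> 'b" and \<tau> N r :: nat
  assumes "\<And>t x. P (t + \<tau>) x = P t x"
  shows "P (N * \<tau> + r) x = P r x"
proof (induction N)
  case (Suc N)
  have "P (Suc N * \<tau> + r) x = P (N * \<tau> + r + \<tau>) x"
    by (simp add: ac_simps)
  then show ?case using Suc assms by simp
qed simp

definition periodic_limit :: "nat \<Rightarrow> (nat \<Rightarrow> real \<Rightarrow> real) \<Rightarrow> (nat \<Rightarrow> real \<Rightarrow> real) \<Rightarrow> bool" where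
  "periodic_limit \<tau> f P \<longleftrightarrow> (\<forall>K e. compact K \<longrightarrow> e > 0 \<longrightarrow>
      (\<exists>N. \<forall>n\<ge>N. \<forall>r. \<forall>x\<in>K. \<bar>f (n * \<tau> + r) x - P r x\<bar> < e))"

lemma periodic_limitE:
  assumes "periodic_limit \<tau> f P" "compact K" "e > 0"
  obtains N where "\<And>n r x. n \<ge> N \<Longrightarrow> x \<in> K \<Longrightarrow> \<bar>f (n * \<tau> + r) x - P r x\<bar> < e"
  using assms unfolding periodic_limit_def by meson

lemma periodic_limit_if_asymptotically_periodic:
  assumes tau_pos: "\<tau> > 0"
    and f_decomp: "\<And>t x. f t x = P t x + R t x"
    and P_per: "\<And>t x. P (t + \<tau>) x = P t x"
    and R_lim: "\<And>K e. compact K \<Longrightarrow> e > 0 \<Longrightarrow> \<exists>N. \<forall>t\<ge>N. \<forall>x\<in>K. \<bar>R t x\<bar> < e"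
  shows "periodic_limit \<tau> f P"
  unfolding periodic_limit_def
proof (intro allI impI)
  fix K :: "real set" and e :: real
  assume "compact K" "e > 0"
  then obtain N where N: "\<And>t x. t \<ge> N \<Longrightarrow> x \<in> K \<Longrightarrow> \<bar>R t x\<bar> < e"
    using R_lim by meson
  have "\<bar>f (n * \<tau> + r) x - P r x\<bar> < e" if "n \<ge> N" "x \<in> K" for n r x
  proof -
    have "n \<le> n * \<tau>"
      using tau_pos by simp
    then have "n * \<tau> + r \<ge> N"
      using that(1) by linarith
    then show ?thesis
      using N[OF _ that(2)] f_decomp periodic_shift[of P, OF P_per] by simp
  qed
  then show "\<exists>N. \<forall>n\<ge>N. \<forall>r. \<forall>x\<in>K. \<bar>f (n * \<tau> + r) x - P r x\<bar> < e"
    by blast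
qed

lemma isCont_periodic_limit:
  assumes lim: "periodic_limit \<tau> f P" and f_cont: "\<And>t. continuous_on UNIV (f t)"
  shows "isCont (P r) x"
proof (rule isCont_if_locally_uniform_approx)
  fix e :: real assume "e > 0"
  obtain N where N: "\<And>n r z. n \<ge> N \<Longrightarrow> z \<in> cball x 1 \<Longrightarrow> \<bar>f (n * \<tau> + r) z - P r z\<bar> < e"
    using periodic_limitE[OF lim compact_cball \<open>e > 0\<close>] by blast
  have "isCont (f (N * \<tau> + r)) x"
    using f_cont by (simp add: continuous_on_eq_continuous_at)
  moreover have "\<forall>z\<in>cball x 1. \<bar>P r z - f (N * \<tau> + r) z\<bar> < e"
    using N by (simp add: abs_minus_commute)
  ultimately show "\<exists>h. isCont h x \<and> (\<forall>z\<in>cball x 1. \<bar>P r z - h z\<bar> < e)"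
    by blast
qed

lemma tendsto_periodic_limit:
  assumes lim: "periodic_limit \<tau> f P" and f_cont: "\<And>t. continuous_on UNIV (f t)"
    and q: "filterlim q at_top sequentially" and z: "z \<longlonglongrightarrow> w"
  shows "(\<lambda>j. f (q j * \<tau> + r) (z j)) \<longlonglongrightarrow> P r w"
proof -
  have "(\<lambda>j. f (q j * \<tau> + r) (z j) - P r (z j)) \<longlonglongrightarrow> 0"
  proof (rule tendstoI)
    fix e :: real assume "e > 0"
    obtain N where N: "\<And>n r x. n \<ge> N \<Longrightarrow> x \<in> cball w 1 \<Longrightarrow> \<bar>f (n * \<tau> + r) x - P r x\<bar> < e"
      using periodic_limitE[OF lim compact_cball \<open>e > 0\<close>] by blast
    have "eventually (\<lambda>j. dist (z j) w < 1) sequentially"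
      using z by (rule tendstoD) simp
    moreover have "eventually (\<lambda>j. q j \<ge> N) sequentially"
      using q by (simp add: filterlim_at_top)
    ultimately show "eventually (\<lambda>j. dist (f (q j * \<tau> + r) (z j) - P r (z j)) 0 < e) sequentially"
      by eventually_elim (use N in \<open>simp add: dist_real_def dist_commute\<close>)
  qed
  moreover have "(\<lambda>j. P r (z j)) \<longlonglongrightarrow> P r w"
    using isCont_tendsto_compose[OF isCont_periodic_limit[OF lim f_cont] z] .
  ultimately show ?thesis
    using tendsto_add by force
qed

lemma sol_tendsto_periodic_limit:
  assumes lim: "periodic_limit \<tau> f P" and f_cont: "\<And>t. continuous_on UNIV (f t)"
    and q: "filterlim q at_top sequentially" and "(\<lambda>j. sol f u (q j * \<tau>)) \<longlonglongrightarrow> v"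
  shows "(\<lambda>j. sol f u (q j * \<tau> + r)) \<longlonglongrightarrow> sol P v r"
proof (induction r)
  case (Suc r)
  have "(\<lambda>j. f (q j * \<tau> + r) (sol f u (q j * \<tau> + r))) \<longlonglongrightarrow> P r (sol P v r)"
    by (rule tendsto_periodic_limit[OF lim f_cont q Suc])
  then show ?case by simp
qed (use assms(4) in simp)

lemma periodic_limit_in_Hplus:
  assumes lim: "periodic_limit \<tau> f P"
  shows "P \<in> Hplus f"
  unfolding Hplus_def
proof (intro CollectI allI impI)
  fix T :: "nat set" and K :: "real set" and e :: real
  assume "finite T" and K: "compact K" and e: "e > 0"
  obtain N where N: "\<And>n r x. n \<ge> N \<Longrightarrow> x \<in> K \<Longrightarrow> \<bar>f (n * \<tau> + r) x - P r x\<bar> < e"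
    using periodic_limitE[OF lim K e] by blast
  have "\<forall>t\<in>T. \<forall>x\<in>K. \<bar>f (t + N * \<tau>) x - P t x\<bar> < e"
    using N[OF order_refl] by (simp add: add.commute)
  then show "\<exists>h. \<forall>t\<in>T. \<forall>x\<in>K. \<bar>f (t + h) x - P t x\<bar> < e"
    by blast
qed

theorem mainTheorem19:
  fixes \<tau> :: nat and f P R :: "nat \<Rightarrow> real \<Rightarrow> real" and u0 :: real
  assumes tau_pos: "\<tau> > 0"
    and f_cont: "\<And>t. continuous_on UNIV (f t)"
    and f_decomp: "\<And>t x. f t x = P t x + R t x"
    and P_per: "\<And>t x. P (t + \<tau>) x = P t x"
    and R_lim: "\<And>K e. compact K \<Longrightarrow> e > 0 \<Longrightarrow>
                  \<exists>N. \<forall>t\<ge>N. \<forall>x\<in>K. \<bar>R t x\<bar> < e"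
    and isolated: "\<And>v. periodic_sol \<tau> P v \<Longrightarrow> isolated_periodic_sol \<tau> P v"
    and incr: "\<And>g t. g \<in> Hplus f \<Longrightarrow> strict_mono (g t)"
    and bdd: "bounded (range (sol f u0))"
  shows "\<exists>p :: nat \<Rightarrow> real. (\<forall>t. p (t + \<tau>) = p t) \<and>
           (\<lambda>t. sol f u0 t - p t) \<longlonglongrightarrow> 0"
proof -
  have lim: "periodic_limit \<tau> f P"
    using tau_pos f_decomp P_per R_lim by (rule periodic_limit_if_asymptotically_periodic)
  define y where "y k = sol f u0 (k * \<tau>)" for k
  have "convergent y"
  proof (rule convergent_if_follows_at_limits[where \<Phi> = "\<lambda>v. sol P v \<tau>"])
    show "bounded (range y)"
      using bdd by (rule bounded_subset) (auto simp: y_def)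
    show "mono (\<lambda>v. sol P v \<tau>)"
      using incr[OF periodic_limit_in_Hplus[OF lim]] by (intro mono_sol strict_mono_mono)
    have y_Suc: "y (Suc k) = sol f u0 (k * \<tau> + \<tau>)" for k
      by (simp add: y_def add.commute)
    show "follows_at_limits (\<lambda>v. sol P v \<tau>) y"
      unfolding follows_at_limits_def y_Suc
      by (auto simp: y_def comp_def intro: sol_tendsto_periodic_limit[OF lim f_cont])
    show "\<exists>\<delta>>0. \<forall>u. u \<noteq> v \<and> \<bar>u - v\<bar> < \<delta> \<longrightarrow> sol P u \<tau> \<noteq> u" if "sol P v \<tau> = v" for v
      using isolated that unfolding isolated_periodic_sol_def periodic_sol_def by blast
  qed
  then obtain L where "(\<lambda>k. sol f u0 (k * \<tau>)) \<longlonglongrightarrow> L"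
    unfolding y_def convergent_def by blast
  then have "(\<lambda>k. sol f u0 (k * \<tau> + r)) \<longlonglongrightarrow> sol P L r" for r
    by (rule sol_tendsto_periodic_limit[OF lim f_cont filterlim_ident])
  then have "(\<lambda>t. sol f u0 t - sol P L (t mod \<tau>)) \<longlonglongrightarrow> 0"
    by (intro tendsto_diff_periodic_if_tendsto_residue_classes tau_pos)
  then show ?thesis
    by (intro exI[of _ "\<lambda>t. sol P L (t mod \<tau>)"]) simp
qed

end
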